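(* Let $N\ge 2$, $1<p<N$, let $B$ be the open unit ball in $\mathbb{R}^N$, and let $u$ be a smooth function with compact support in $B$. Then there exist constants $c_1,c_2>0$, depending only on $p$, $N$ and $|B|$, such that \[ c_1\left(\|u\|_{L^{p^*}(B)}^{p^*}+|B|\right)\le \int_B F_p(u)\,dx\le c_2\left(\|u\|_{L^{p^*}(B)}^{p^*}+|B|\right). \] Furthermore, \[ \int_B F_p(u)\,dx\to \int_B e^{\alpha_N|u|^{\frac{N}{N-1}}}\,dx\quad\text{as } p\to N . \]
   Context: $p^*=Np/(N-p)$. $\omega_{N-1}$ is the surface measure of the unit sphere in $\mathbb{R}^N$ and $\alpha_N=N\omega_{N-1}^{\frac{1}{N-1}}$. For $1<p<N$, $F_p:\mathbb{R}\to\mathbb{R}_+$ is defined by \[ F_p(s)=\left[1+\frac{N-p}{N(p-1)}\alpha_p|s|^{\frac{p}{p-1}}\right]^{\frac{N(p-1)}{N-p}},\qquad \alpha_p=\left(\alpha_N^{\frac{N-1}{N}}|B|^{\frac1p-\frac1N}\right)^{\frac{p}{p-1}} . \] *)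

theory Defs
  imports "HOL-Analysis.Analysis"
begin

fun Ck :: "nat \<Rightarrow> ('a::euclidean_space \<Rightarrow> real) \<Rightarrow> bool" where
  "Ck 0 f = continuous_on UNIV f"
| "Ck (Suc k) f = ((\<forall>x. f differentiable (at x)) \<and>
      (\<forall>v. Ck k (\<lambda>x. frechet_derivative f (at x) v)))"

definition smooth :: "('a::euclidean_space \<Rightarrow> real) \<Rightarrow> bool" where
  "smooth f = (\<forall>k. Ck k f)"

definition compact_support_in :: "('a::euclidean_space \<Rightarrow> real) \<Rightarrow> 'a set \<Rightarrow> bool" where
  "compact_support_in u S = (compact (closure {x. u x \<noteq> 0}) \<and> closure {x. u x \<noteq> 0} \<subseteq> S)"

definition unitB :: "(real ^ ('n::finite)) set" where
  "unitB = ball 0 1"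

definition volB :: "('n::finite) itself \<Rightarrow> real" where
  "volB _ = measure lebesgue (unitB :: (real ^ 'n) set)"

definition dimN :: "('n::finite) itself \<Rightarrow> real" where
  "dimN _ = real CARD('n)"

(* surface measure of the unit sphere S^{N-1}: omega_{N-1} = N |B| *)
definition omega :: "('n::finite) itself \<Rightarrow> real" where
  "omega t = dimN t * volB t"

definition alphaN :: "('n::finite) itself \<Rightarrow> real" where
  "alphaN t = dimN t * omega t powr (1 / (dimN t - 1))"

definition alpha_p :: "('n::finite) itself \<Rightarrow> real \<Rightarrow> real" where
  "alpha_p t p = (alphaN t powr ((dimN t - 1) / dimN t) * volB t powr (1/p - 1/dimN t))
                   powr (p / (p - 1))"

definition pstar :: "('n::finite) itself \<Rightarrow> real \<Rightarrow> real" where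
  "pstar t p = dimN t * p / (dimN t - p)"

definition Fp :: "('n::finite) itself \<Rightarrow> real \<Rightarrow> real \<Rightarrow> real" where
  "Fp t p s = (1 + (dimN t - p) / (dimN t * (p - 1)) * alpha_p t p * \<bar>s\<bar> powr (p / (p - 1)))
                powr (dimN t * (p - 1) / (dimN t - p))"

end

theory Submission
  imports Defs
begin

(*
  With e = N(p-1)/(N-p) one has F_p(s) = (1 + alpha_p |s|^(p/(p-1)) / e)^e, and
  e p/(p-1) = pstar.  Since (1+X)^e is comparable to 1 + X^e for fixed e > 0, F_p(s) is
  comparable to |s|^pstar + 1 pointwise, and integrating over B gives the two-sided bound.
  As p -> N, e -> infinity and alpha_p -> alpha_N, so F_p(s) -> exp (alpha_N |s|^(N/(N-1)))
  exactly as (1 + x/n)^n -> e^x.  Since F_p(s) <= exp (alpha_p |s|^(p/(p-1))), the integrands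
  are uniformly bounded for p near N on the bounded range of u over B, and dominated
  convergence applies.
*)

lemma one_plus_powr_bounds:
  fixes X e :: real
  assumes "0 \<le> X" "0 < e"
  shows "(1 + X powr e) / 2 \<le> (1 + X) powr e"
    and "(1 + X) powr e \<le> 2 powr e * (1 + X powr e)"
proof -
  have "1 \<le> (1 + X) powr e" and "X powr e \<le> (1 + X) powr e"
    using assms by (auto intro: ge_one_powr_ge_zero powr_mono2)
  then show "(1 + X powr e) / 2 \<le> (1 + X) powr e" by simp
  have "(1 + X) powr e \<le> (2 * max 1 X) powr e"
    using assms by (intro powr_mono2) auto
  also have "\<dots> = 2 powr e * max 1 X powr e"
    using assms by (simp add: powr_mult)
  also have "max 1 X powr e \<le> 1 + X powr e"
    using assms by (cases "X \<le> 1") (auto simp: max_def intro: powr_le1)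
  finally show "(1 + X) powr e \<le> 2 powr e * (1 + X powr e)"
    by (simp add: mult_left_mono)
qed

lemma one_plus_mult_powr_bounds:
  fixes a e r s :: real
  assumes "0 < a" "0 < e"
  shows "min 1 (a powr e) / 2 * (\<bar>s\<bar> powr (r * e) + 1) \<le> (1 + a * \<bar>s\<bar> powr r) powr e"
    and "(1 + a * \<bar>s\<bar> powr r) powr e \<le> 2 powr e * max 1 (a powr e) * (\<bar>s\<bar> powr (r * e) + 1)"
proof -
  define X where "X = a * \<bar>s\<bar> powr r"
  have X: "X powr e = a powr e * \<bar>s\<bar> powr (r * e)"
    unfolding X_def using assms by (simp add: powr_mult powr_powr)
  have "min 1 (a powr e) / 2 * (\<bar>s\<bar> powr (r * e) + 1)
      = (min 1 (a powr e) + min 1 (a powr e) * \<bar>s\<bar> powr (r * e)) / 2"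
    by (simp add: algebra_simps)
  also have "\<dots> \<le> (1 + X powr e) / 2"
    unfolding X by (intro divide_right_mono add_mono mult_right_mono) auto
  also have "\<dots> \<le> (1 + X) powr e"
    using assms by (intro one_plus_powr_bounds) (auto simp: X_def)
  finally show "min 1 (a powr e) / 2 * (\<bar>s\<bar> powr (r * e) + 1) \<le> (1 + a * \<bar>s\<bar> powr r) powr e"
    unfolding X_def .
  have "(1 + X) powr e \<le> 2 powr e * (1 + X powr e)"
    using assms by (intro one_plus_powr_bounds) (auto simp: X_def)
  also have "\<dots> \<le> 2 powr e * (max 1 (a powr e) + max 1 (a powr e) * \<bar>s\<bar> powr (r * e))"
    unfolding X by (intro mult_left_mono add_mono mult_right_mono) auto
  also have "\<dots> = 2 powr e * max 1 (a powr e) * (\<bar>s\<bar> powr (r * e) + 1)"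
    by (simp add: algebra_simps)
  finally show "(1 + a * \<bar>s\<bar> powr r) powr e \<le> 2 powr e * max 1 (a powr e) * (\<bar>s\<bar> powr (r * e) + 1)"
    unfolding X_def .
qed

lemma one_plus_div_powr_le_exp:
  fixes Y e :: real
  assumes "0 \<le> Y" "0 < e"
  shows "(1 + Y / e) powr e \<le> exp Y"
proof -
  have "(1 + Y / e) powr e \<le> exp (Y / e) powr e"
    using assms by (intro powr_mono2) auto
  also have "\<dots> = exp Y"
    using assms by (simp add: powr_def)
  finally show ?thesis .
qed

lemma ln_one_plus_div_bounds:
  fixes Y e :: real
  assumes "0 \<le> Y" "Y \<le> e" "0 < e"
  shows "Y - Y\<^sup>2 / e \<le> e * ln (1 + Y / e)"
    and "e * ln (1 + Y / e) \<le> Y"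
proof -
  have "Y / e - (Y / e)\<^sup>2 \<le> ln (1 + Y / e)"
    using assms by (intro ln_one_plus_pos_lower_bound) auto
  moreover have "e * (Y / e - (Y / e)\<^sup>2) = Y - Y\<^sup>2 / e"
    using assms by (simp add: field_simps power2_eq_square)
  ultimately show "Y - Y\<^sup>2 / e \<le> e * ln (1 + Y / e)"
    using mult_left_mono[of _ _ e] assms by fastforce
  have "ln (1 + Y / e) \<le> Y / e"
    using assms by (intro ln_add_one_self_le_self) auto
  from mult_left_mono[OF this, of e] assms
  show "e * ln (1 + Y / e) \<le> Y"
    by simp
qed

lemma tendsto_one_plus_div_powr_exp:
  fixes Y e :: "'a \<Rightarrow> real"
  assumes e: "filterlim e at_top F" and Y: "(Y \<longlongrightarrow> L) F"
    and Y_nonneg: "\<forall>\<^sub>F x in F. 0 \<le> Y x"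
  shows "((\<lambda>x. (1 + Y x / e x) powr e x) \<longlongrightarrow> exp L) F"
proof -
  have "((\<lambda>x. Y x / e x) \<longlongrightarrow> 0) F"
    using Y e by (intro tendsto_divide_0 filterlim_at_top_imp_at_infinity)
  then have "\<forall>\<^sub>F x in F. Y x / e x < 1"
    by (rule order_tendstoD) simp
  moreover have "\<forall>\<^sub>F x in F. 0 < e x"
    using e filterlim_at_top_dense by blast
  ultimately have ev: "\<forall>\<^sub>F x in F. 0 \<le> Y x \<and> Y x \<le> e x \<and> 0 < e x"
    using Y_nonneg by eventually_elim (simp add: divide_less_eq)
  have lower: "\<forall>\<^sub>F x in F. Y x - (Y x)\<^sup>2 / e x \<le> e x * ln (1 + Y x / e x)"
    and upper: "\<forall>\<^sub>F x in F. e x * ln (1 + Y x / e x) \<le> Y x"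
    using ev by (eventually_elim, intro ln_one_plus_div_bounds, auto)+
  have "((\<lambda>x. (Y x)\<^sup>2) \<longlongrightarrow> L\<^sup>2) F"
    using Y by (rule tendsto_power)
  then have "((\<lambda>x. Y x - (Y x)\<^sup>2 / e x) \<longlongrightarrow> L) F"
    using tendsto_diff[OF Y tendsto_divide_0] e filterlim_at_top_imp_at_infinity by fastforce
  then have "((\<lambda>x. e x * ln (1 + Y x / e x)) \<longlongrightarrow> L) F"
    by (rule tendsto_sandwich[OF lower upper _ Y])
  then have "((\<lambda>x. exp (e x * ln (1 + Y x / e x))) \<longlongrightarrow> exp L) F"
    by (rule tendsto_exp)
  moreover have "\<forall>\<^sub>F x in F. exp (e x * ln (1 + Y x / e x)) = (1 + Y x / e x) powr e x"
    using ev
  proof eventually_elim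
    case (elim x)
    then have "0 < 1 + Y x / e x"
      by (simp add: add_pos_nonneg)
    then show ?case
      by (simp add: powr_def)
  qed
  ultimately show ?thesis
    by (rule Lim_transform_eventually)
qed

lemma set_integrable_bounded:
  fixes f :: "'a \<Rightarrow> real"
  assumes "A \<in> sets M" "emeasure M A < \<infinity>" "f \<in> borel_measurable M"
    and "\<And>x. x \<in> A \<Longrightarrow> \<bar>f x\<bar> \<le> K"
  shows "set_integrable M A f"
  unfolding set_integrable_def using assms
  by (intro integrableI_bounded_set_indicator[where B = K]) auto

lemma set_integral_two_sided_comparison:
  fixes f g :: "'a \<Rightarrow> real"
  assumes A: "A \<in> sets M" "emeasure M A < \<infinity>"
    and int: "set_integrable M A f" "set_integrable M A g"
    and lower: "\<And>x. x \<in> A \<Longrightarrow> c1 * (g x + 1) \<le> f x"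
    and upper: "\<And>x. x \<in> A \<Longrightarrow> f x \<le> c2 * (g x + 1)"
  shows "c1 * ((LINT x:A|M. g x) + measure M A) \<le> (LINT x:A|M. f x)"
    and "(LINT x:A|M. f x) \<le> c2 * ((LINT x:A|M. g x) + measure M A)"
proof -
  have one: "set_integrable M A (\<lambda>_. 1::real)"
    using A by (intro set_integrable_bounded[where K = 1]) auto
  have g1: "set_integrable M A (\<lambda>x. c * (g x + 1))" for c
    using int(2) one by (intro set_integrable_mult_right set_integral_add)
  have sum: "(LINT x:A|M. g x) + measure M A = (LINT x:A|M. g x + 1)"
    using A int(2) one by (simp add: set_integral_const less_top)
  show "c1 * ((LINT x:A|M. g x) + measure M A) \<le> (LINT x:A|M. f x)"
    unfolding sum using set_integral_mono[OF g1 int(1) lower] by simp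
  show "(LINT x:A|M. f x) \<le> c2 * ((LINT x:A|M. g x) + measure M A)"
    unfolding sum using set_integral_mono[OF int(1) g1 upper] by simp
qed

lemma tendsto_set_integral_bounded_convergence:
  fixes f :: "'b::first_countable_topology \<Rightarrow> 'a \<Rightarrow> real"
  assumes A: "A \<in> sets M" "emeasure M A < \<infinity>"
    and meas: "\<And>t. f t \<in> borel_measurable M" "g \<in> borel_measurable M"
    and lim: "\<And>x. x \<in> A \<Longrightarrow> ((\<lambda>t. f t x) \<longlongrightarrow> g x) (at a within S)"
    and bound: "\<forall>\<^sub>F t in at a within S. \<forall>x\<in>A. \<bar>f t x\<bar> \<le> K"
  shows "((\<lambda>t. LINT x:A|M. f t x) \<longlongrightarrow> (LINT x:A|M. g x)) (at a within S)"
  unfolding tendsto_at_iff_sequentially comp_def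
proof safe
  fix X :: "nat \<Rightarrow> 'b"
  assume "\<forall>i. X i \<in> S - {a}" "X \<longlonglongrightarrow> a"
  then have X: "filterlim X (at a within S) sequentially"
    by (auto simp: filterlim_at intro!: always_eventually)
  obtain n0 where n0: "\<And>n. n0 \<le> n \<Longrightarrow> \<forall>x\<in>A. \<bar>f (X n) x\<bar> \<le> K"
    using filterlim_iff[THEN iffD1, OF X, rule_format, OF bound]
    by (auto simp: eventually_sequentially)
  have "(\<lambda>n. LINT x:A|M. f (X (n + n0)) x) \<longlonglongrightarrow> (LINT x:A|M. g x)"
    unfolding set_lebesgue_integral_def
  proof (rule integral_dominated_convergence[where w = "\<lambda>x. K * indicator A x"])
    show "integrable M (\<lambda>x. K * indicator A x)"
      using A by (intro integrable_mult_right integrable_real_indicator) auto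
    show "(\<lambda>x. indicator A x *\<^sub>R g x) \<in> borel_measurable M"
      and "(\<lambda>x. indicator A x *\<^sub>R f (X (n + n0)) x) \<in> borel_measurable M" for n
      using A(1) meas by (auto intro!: borel_measurable_scaleR borel_measurable_indicator)
    show "AE x in M. norm (indicator A x *\<^sub>R f (X (n + n0)) x) \<le> K * indicator A x" for n
      using n0[of "n + n0"] by (intro AE_I2) (simp add: indicator_def)
    show "AE x in M. (\<lambda>n. indicator A x *\<^sub>R f (X (n + n0)) x) \<longlonglongrightarrow> indicator A x *\<^sub>R g x"
    proof (rule AE_I2)
      fix x
      show "(\<lambda>n. indicator A x *\<^sub>R f (X (n + n0)) x) \<longlonglongrightarrow> indicator A x *\<^sub>R g x"
      proof (cases "x \<in> A")
        case True
        have "(\<lambda>n. f (X n) x) \<longlonglongrightarrow> g x"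
          using filterlim_compose[OF lim[OF True] X] .
        then have "(\<lambda>n. f (X (n + n0)) x) \<longlonglongrightarrow> g x"
          by (rule LIMSEQ_ignore_initial_segment)
        then show ?thesis
          using True by simp
      qed simp
    qed
  qed
  then show "(\<lambda>n. LINT x:A|M. f (X n) x) \<longlonglongrightarrow> (LINT x:A|M. g x)"
    by (rule LIMSEQ_offset)
qed

definition Fp_exponent :: "'n::finite itself \<Rightarrow> real \<Rightarrow> real" where
  "Fp_exponent t q = dimN t * (q - 1) / (dimN t - q)"

lemma Fp_altdef:
  "Fp t q s = (1 + alpha_p t q * \<bar>s\<bar> powr (q / (q - 1)) / Fp_exponent t q) powr Fp_exponent t q"
  unfolding Fp_def Fp_exponent_def by (simp add: field_simps)

lemma pstar_eq_Fp_exponent: "q \<noteq> 1 \<Longrightarrow> pstar t q = q / (q - 1) * Fp_exponent t q"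
  unfolding pstar_def Fp_exponent_def by simp

lemma Fp_exponent_pos: "1 < q \<Longrightarrow> q < dimN t \<Longrightarrow> 0 < Fp_exponent t q"
  unfolding Fp_exponent_def by simp

lemma filterlim_Fp_exponent_at_top:
  assumes "1 < dimN t"
  shows "filterlim (Fp_exponent t) at_top (at_left (dimN t))"
  unfolding Fp_exponent_def[abs_def]
proof (rule LIM_at_top_divide)
  show "((\<lambda>q. dimN t * (q - 1)) \<longlongrightarrow> dimN t * (dimN t - 1)) (at_left (dimN t))"
    by (intro tendsto_intros)
  have "((\<lambda>q. dimN t - q) \<longlongrightarrow> dimN t - dimN t) (at_left (dimN t))"
    by (intro tendsto_intros)
  then show "((\<lambda>q. dimN t - q) \<longlongrightarrow> 0) (at_left (dimN t))"
    by simp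
  show "\<forall>\<^sub>F q in at_left (dimN t). 0 < dimN t - q"
    using eventually_at_left_real[OF assms] by eventually_elim simp
qed (use assms in simp)

lemma dimN_gt_1: "2 \<le> CARD('n::finite) \<Longrightarrow> 1 < dimN TYPE('n)"
  unfolding dimN_def by simp

lemma volB_pos: "0 < volB t"
  unfolding volB_def unitB_def using content_ball_pos[of 1 0] by simp

lemma alphaN_pos: "0 < alphaN t"
  using volB_pos[of t] unfolding alphaN_def omega_def dimN_def by simp

lemma alpha_p_pos: "0 < alpha_p t q"
  using volB_pos[of t] alphaN_pos[of t] unfolding alpha_p_def by simp

lemma tendsto_alpha_p:
  assumes "1 < dimN t"
  shows "(alpha_p t \<longlongrightarrow> alphaN t) (at_left (dimN t))"
proof -
  define N A V where "N = dimN t" and "A = alphaN t" and "V = volB t"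
  have N_gt_1: "1 < N" and A_pos: "0 < A" and V_pos: "0 < V"
    using assms alphaN_pos volB_pos unfolding N_def A_def V_def by auto
  have "((\<lambda>q. (A powr ((N - 1) / N) * V powr (1/q - 1/N)) powr (q / (q - 1)))
      \<longlongrightarrow> (A powr ((N - 1) / N) * V powr (1/N - 1/N)) powr (N / (N - 1))) (at_left N)"
    using N_gt_1 A_pos V_pos by (intro tendsto_intros) auto
  moreover have "(A powr ((N - 1) / N) * V powr (1/N - 1/N)) powr (N / (N - 1)) = A"
    using N_gt_1 A_pos V_pos by (simp add: powr_powr)
  ultimately show ?thesis
    unfolding alpha_p_def[abs_def] N_def A_def V_def by simp
qed

lemma Fp_nonneg: "0 \<le> Fp t q s"
  unfolding Fp_def by simp

lemma Fp_le_exp: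
  assumes "1 < q" "q < dimN t"
  shows "Fp t q s \<le> exp (alpha_p t q * \<bar>s\<bar> powr (q / (q - 1)))"
  unfolding Fp_altdef using assms alpha_p_pos[of t q]
  by (intro one_plus_div_powr_le_exp Fp_exponent_pos) auto

lemma Fp_comparable:
  assumes "1 < p" "p < dimN t"
  obtains c1 c2 where "0 < c1" "0 < c2"
    and "\<And>s. c1 * (\<bar>s\<bar> powr pstar t p + 1) \<le> Fp t p s"
    and "\<And>s. Fp t p s \<le> c2 * (\<bar>s\<bar> powr pstar t p + 1)"
proof -
  define e where "e = Fp_exponent t p"
  define a where "a = alpha_p t p / e"
  have e: "0 < e"
    using Fp_exponent_pos[OF assms] unfolding e_def .
  have a: "0 < a"
    using alpha_p_pos[of t p] e unfolding a_def by simp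
  have Fp: "Fp t p s = (1 + a * \<bar>s\<bar> powr (p / (p - 1))) powr e" for s
    unfolding Fp_altdef a_def e_def by simp
  have pstar: "pstar t p = p / (p - 1) * e"
    unfolding e_def using assms by (simp add: pstar_eq_Fp_exponent)
  show thesis
  proof (rule that)
    show "min 1 (a powr e) / 2 * (\<bar>s\<bar> powr pstar t p + 1) \<le> Fp t p s" for s
      unfolding Fp pstar by (rule one_plus_mult_powr_bounds(1)[OF a e])
    show "Fp t p s \<le> 2 powr e * max 1 (a powr e) * (\<bar>s\<bar> powr pstar t p + 1)" for s
      unfolding Fp pstar by (rule one_plus_mult_powr_bounds(2)[OF a e])
  qed (use a in auto)
qed

lemma tendsto_Fp:
  assumes "1 < dimN t"
  shows "((\<lambda>q. Fp t q s) \<longlongrightarrow> exp (alphaN t * \<bar>s\<bar> powr (dimN t / (dimN t - 1))))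
    (at_left (dimN t))"
  unfolding Fp_altdef
proof (rule tendsto_one_plus_div_powr_exp)
  show "((\<lambda>q. alpha_p t q * \<bar>s\<bar> powr (q / (q - 1)))
      \<longlongrightarrow> alphaN t * \<bar>s\<bar> powr (dimN t / (dimN t - 1))) (at_left (dimN t))"
    using assms by (intro tendsto_intros tendsto_alpha_p) auto
  show "\<forall>\<^sub>F q in at_left (dimN t). 0 \<le> alpha_p t q * \<bar>s\<bar> powr (q / (q - 1))"
    by (intro always_eventually allI) (simp add: less_imp_le[OF alpha_p_pos])
qed (rule filterlim_Fp_exponent_at_top[OF assms])

lemma Fp_eventually_bounded:
  assumes "1 < dimN t"
  obtains K where "\<forall>\<^sub>F q in at_left (dimN t). \<forall>s. \<bar>s\<bar> \<le> M \<longrightarrow> Fp t q s \<le> K"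
proof -
  define N R where "N = dimN t" and "R = N / (N - 1) + 1"
  have "((\<lambda>q. q / (q - 1)) \<longlongrightarrow> N / (N - 1)) (at_left N)"
    using assms unfolding N_def by (intro tendsto_intros) auto
  then have "\<forall>\<^sub>F q in at_left N. q / (q - 1) < R"
    unfolding R_def by (rule order_tendstoD) simp
  moreover have "\<forall>\<^sub>F q in at_left N. alpha_p t q < alphaN t + 1"
    using tendsto_alpha_p[OF assms] unfolding N_def by (rule order_tendstoD) simp
  moreover have "\<forall>\<^sub>F q in at_left N. 1 < q \<and> q < N"
    using eventually_at_left_real[OF assms] unfolding N_def by eventually_elim simp
  ultimately have "\<forall>\<^sub>F q in at_left N. \<forall>s. \<bar>s\<bar> \<le> M \<longrightarrow>
      Fp t q s \<le> exp ((alphaN t + 1) * max 1 M powr R)"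
  proof eventually_elim
    case (elim q)
    show ?case
    proof safe
      fix s :: real
      assume "\<bar>s\<bar> \<le> M"
      then have "\<bar>s\<bar> powr (q / (q - 1)) \<le> max 1 M powr R"
        using elim by (intro order.trans[OF powr_mono2 powr_mono]) auto
      then have "alpha_p t q * \<bar>s\<bar> powr (q / (q - 1)) \<le> (alphaN t + 1) * max 1 M powr R"
        using elim alpha_p_pos[of t q] by (intro mult_mono) auto
      then show "Fp t q s \<le> exp ((alphaN t + 1) * max 1 M powr R)"
        using Fp_le_exp[of q t s] elim unfolding N_def by (meson exp_le_cancel_iff order.trans)
    qed
  qed
  then show thesis
    unfolding N_def by (rule that)
qed

lemma continuous_imp_bounded_on:
  fixes u :: "'a::euclidean_space \<Rightarrow> real"
  assumes "continuous_on UNIV u" "bounded S"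
  obtains K where "\<And>x. x \<in> S \<Longrightarrow> \<bar>u x\<bar> \<le> K"
proof -
  have "compact (closure S)"
    using assms(2) by (simp add: compact_closure)
  then have "bounded (u ` closure S)"
    using assms(1) by (intro compact_imp_bounded compact_continuous_image)
      (auto intro: continuous_on_subset)
  then show thesis
    using that closure_subset unfolding bounded_iff by fastforce
qed

lemma continuous_imp_borel_measurable_lebesgue:
  fixes u :: "'a::euclidean_space \<Rightarrow> real"
  shows "continuous_on UNIV u \<Longrightarrow> u \<in> borel_measurable lebesgue"
  using continuous_imp_measurable_on_sets_lebesgue[of UNIV u] by simp

lemma set_integral_comp_comparable:
  fixes u :: "'a::euclidean_space \<Rightarrow> real" and h :: "real \<Rightarrow> real"
  assumes u: "continuous_on UNIV u" and S: "bounded S" "S \<in> lmeasurable"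
    and h: "h \<in> borel_measurable borel" and r: "0 \<le> r" and c1: "0 \<le> c1"
    and lower: "\<And>s. c1 * (\<bar>s\<bar> powr r + 1) \<le> h s"
    and upper: "\<And>s. h s \<le> c2 * (\<bar>s\<bar> powr r + 1)"
  shows "c1 * ((LINT x:S|lebesgue. \<bar>u x\<bar> powr r) + measure lebesgue S)
      \<le> (LINT x:S|lebesgue. h (u x))"
    and "(LINT x:S|lebesgue. h (u x))
      \<le> c2 * ((LINT x:S|lebesgue. \<bar>u x\<bar> powr r) + measure lebesgue S)"
proof -
  have S': "S \<in> sets lebesgue" "emeasure lebesgue S < \<infinity>"
    using S(2) by (auto simp: fmeasurable_def)
  note h[measurable]
  have [measurable]: "u \<in> borel_measurable lebesgue"
    using u by (rule continuous_imp_borel_measurable_lebesgue)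
  obtain M where M: "\<And>x. x \<in> S \<Longrightarrow> \<bar>u x\<bar> \<le> M"
    using continuous_imp_bounded_on[OF u S(1)] by blast
  have pow_le: "\<bar>u x\<bar> powr r \<le> M powr r" if "x \<in> S" for x
    using M[OF that] r by (intro powr_mono2) auto
  have "c1 \<le> h 0" "h 0 \<le> c2"
    using lower[of 0] upper[of 0] by simp_all
  then have c2: "0 \<le> c2"
    using c1 by linarith
  have "set_integrable lebesgue S (\<lambda>x. \<bar>u x\<bar> powr r)"
    by (rule set_integrable_bounded[OF S', where K = "M powr r"]) (measurable, simp add: pow_le)
  moreover have "set_integrable lebesgue S (\<lambda>x. h (u x))"
  proof (rule set_integrable_bounded[OF S'])
    show "(\<lambda>x. h (u x)) \<in> borel_measurable lebesgue"
      by measurable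
    fix x assume "x \<in> S"
    have "0 \<le> c1 * (\<bar>u x\<bar> powr r + 1)"
      using c1 by simp
    then have "0 \<le> h (u x)"
      using lower by (rule order.trans)
    moreover have "h (u x) \<le> c2 * (M powr r + 1)"
      using c2 pow_le[OF \<open>x \<in> S\<close>] by (intro order.trans[OF upper] mult_left_mono) auto
    ultimately show "\<bar>h (u x)\<bar> \<le> c2 * (M powr r + 1)"
      by simp
  qed
  ultimately show "c1 * ((LINT x:S|lebesgue. \<bar>u x\<bar> powr r) + measure lebesgue S)
      \<le> (LINT x:S|lebesgue. h (u x))"
    and "(LINT x:S|lebesgue. h (u x))
      \<le> c2 * ((LINT x:S|lebesgue. \<bar>u x\<bar> powr r) + measure lebesgue S)"
    using set_integral_two_sided_comparison[OF S', where f = "\<lambda>x. h (u x)", OF _ _ lower upper]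
    by blast+
qed

lemma tendsto_set_integral_Fp:
  fixes u :: "'a::euclidean_space \<Rightarrow> real"
  assumes u: "continuous_on UNIV u" and S: "bounded S" "S \<in> lmeasurable"
    and N: "1 < dimN t"
  shows "((\<lambda>q. LINT x:S|lebesgue. Fp t q (u x))
    \<longlongrightarrow> (LINT x:S|lebesgue. exp (alphaN t * \<bar>u x\<bar> powr (dimN t / (dimN t - 1)))))
    (at_left (dimN t))"
proof -
  have S': "S \<in> sets lebesgue" "emeasure lebesgue S < \<infinity>"
    using S(2) by (auto simp: fmeasurable_def)
  have [measurable]: "u \<in> borel_measurable lebesgue"
    using u by (rule continuous_imp_borel_measurable_lebesgue)
  obtain M where M: "\<And>x. x \<in> S \<Longrightarrow> \<bar>u x\<bar> \<le> M"
    using continuous_imp_bounded_on[OF u S(1)] by blast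
  obtain K where "\<forall>\<^sub>F q in at_left (dimN t). \<forall>s. \<bar>s\<bar> \<le> M \<longrightarrow> Fp t q s \<le> K"
    using Fp_eventually_bounded[OF N] by blast
  then have bound: "\<forall>\<^sub>F q in at_left (dimN t). \<forall>x\<in>S. \<bar>Fp t q (u x)\<bar> \<le> K"
    by eventually_elim (simp add: M Fp_nonneg)
  show ?thesis
  proof (rule tendsto_set_integral_bounded_convergence[OF S' _ _ _ bound])
    show "(\<lambda>x. Fp t q (u x)) \<in> borel_measurable lebesgue" for q
      unfolding Fp_def by measurable
    show "(\<lambda>x. exp (alphaN t * \<bar>u x\<bar> powr (dimN t / (dimN t - 1)))) \<in> borel_measurable lebesgue"
      by measurable
    show "((\<lambda>q. Fp t q (u x)) \<longlongrightarrow> exp (alphaN t * \<bar>u x\<bar> powr (dimN t / (dimN t - 1))))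
        (at_left (dimN t))" for x
      using N by (rule tendsto_Fp)
  qed
qed

lemma smooth_imp_continuous: "smooth f \<Longrightarrow> continuous_on UNIV f"
  unfolding smooth_def by (metis Ck.simps(1))

theorem proposition1p1:
  fixes p :: real
  assumes N2: "CARD('n) \<ge> 2"
    and p1: "1 < p" and pN: "p < dimN TYPE('n)"
  shows "\<exists>c1 c2. c1 > 0 \<and> c2 > 0 \<and>
           (\<forall>u :: real ^ 'n \<Rightarrow> real. smooth u \<and> compact_support_in u unitB \<longrightarrow>
              c1 * ((LINT x:unitB|lebesgue. \<bar>u x\<bar> powr pstar TYPE('n) p) + volB TYPE('n))
                \<le> (LINT x:unitB|lebesgue. Fp TYPE('n) p (u x)) \<and>
              (LINT x:unitB|lebesgue. Fp TYPE('n) p (u x))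
                \<le> c2 * ((LINT x:unitB|lebesgue. \<bar>u x\<bar> powr pstar TYPE('n) p) + volB TYPE('n)))
         \<and> (\<forall>u :: real ^ 'n \<Rightarrow> real. smooth u \<and> compact_support_in u unitB \<longrightarrow>
              ((\<lambda>q. LINT x:unitB|lebesgue. Fp TYPE('n) q (u x))
                 \<longlongrightarrow> (LINT x:unitB|lebesgue.
                        exp (alphaN TYPE('n) * \<bar>u x\<bar> powr (dimN TYPE('n) / (dimN TYPE('n) - 1)))))
               (at_left (dimN TYPE('n))))"
proof -
  obtain c1 c2 where c: "0 < c1" "0 < c2" and Fp_bounds:
    "\<And>s. c1 * (\<bar>s\<bar> powr pstar TYPE('n) p + 1) \<le> Fp TYPE('n) p s"
    "\<And>s. Fp TYPE('n) p s \<le> c2 * (\<bar>s\<bar> powr pstar TYPE('n) p + 1)"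
    using Fp_comparable[OF p1 pN] by blast
  have Fp_meas: "Fp TYPE('n) p \<in> borel_measurable borel"
    unfolding Fp_def by measurable
  have pstar_nonneg: "0 \<le> pstar TYPE('n) p"
    using p1 pN unfolding pstar_def by simp
  have unitB: "bounded unitB" "unitB \<in> lmeasurable"
    unfolding unitB_def by auto
  show ?thesis
    unfolding volB_def
    by (intro exI[of _ c1] exI[of _ c2] conjI c allI impI
        set_integral_comp_comparable[OF smooth_imp_continuous unitB Fp_meas pstar_nonneg _ Fp_bounds]
        tendsto_set_integral_Fp[OF smooth_imp_continuous unitB dimN_gt_1[OF N2]])
      (use c in auto)
qed

end
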